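(* Let $m$ be a positive integer, let $\alpha>1$ with $56^m(\alpha-1)<1$, let $\mathcal{S}$ be an $\alpha$-Carleson family of dyadic cubes in $\mathbb{R}^n$, let $f\ge0$ be locally integrable, and for a positive integer $k$ let $\mathcal{S}_k=\{Q\in\mathcal{S}:\ 56^{-m(k+1)}<\frac{1}{|Q|}\int_Qf\le56^{-km}\}$. For $Q\in\mathcal{S}_k$ put $E_Q=Q\setminus\bigcup_{Q'\in\mathcal{S}_k,\,Q'\subsetneq Q}Q'$. Then for every $Q\in\mathcal{S}_k$, \[ \int_Qf\le\frac{1}{1-56^m(\alpha-1)}\int_{E_Q}f. \]
   Context: A family $\mathcal{S}$ of dyadic cubes is $\alpha$-Carleson ($\alpha>1$) if $\sum_{P\in\mathcal{S},\,P\subseteq Q}|P|\le\alpha|Q|$ for every $Q\in\mathcal{S}$. *)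

theory Defs
  imports "HOL-Analysis.Analysis"
begin

definition dyadic_cube :: "(real ^ 'n) set \<Rightarrow> bool" where
  "dyadic_cube Q \<longleftrightarrow> (\<exists>(j::int) (k::'n \<Rightarrow> int).
     Q = {x. \<forall>i. real_of_int (k i) * 2 powr (- real_of_int j) \<le> x $ i
                \<and> x $ i < (real_of_int (k i) + 1) * 2 powr (- real_of_int j)})"

definition carleson :: "real \<Rightarrow> (real ^ 'n) set set \<Rightarrow> bool" where
  "carleson \<alpha> S \<longleftrightarrow> (\<forall>Q\<in>S. dyadic_cube Q) \<and>
     (\<forall>Q\<in>S. (\<Sum>\<^sub>\<infinity>P\<in>{P\<in>S. P \<subseteq> Q}. emeasure lborel P) \<le> ennreal \<alpha> * emeasure lborel Q)"

definition locally_integrable :: "(real ^ 'n \<Rightarrow> real) \<Rightarrow> bool" where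
  "locally_integrable f \<longleftrightarrow> (\<forall>K. compact K \<longrightarrow> set_integrable lborel K f)"

definition Sk :: "nat \<Rightarrow> nat \<Rightarrow> (real ^ 'n) set set \<Rightarrow> (real ^ 'n \<Rightarrow> real) \<Rightarrow> (real ^ 'n) set set" where
  "Sk m k S f = {Q\<in>S. (1/56::real) ^ (m*(k+1)) < (1 / measure lborel Q) * (LINT x:Q|lborel. f x)
                     \<and> (1 / measure lborel Q) * (LINT x:Q|lborel. f x) \<le> (1/56::real) ^ (k*m)}"

definition EQ :: "(real ^ 'n) set set \<Rightarrow> (real ^ 'n) set \<Rightarrow> (real ^ 'n) set" where
  "EQ T Q = Q - \<Union>{Q'\<in>T. Q' \<subset> Q}"

end

theory Submission
  imports Defs
begin

text \<open>Let U be the cubes of S_k lying strictly inside Q, so that Q is the disjoint union of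
  E_Q and \<Union>U. Every P \<in> U satisfies \<integral>_P f \<le> 56^(-km) |P|, and the Carleson condition at Q
  gives \<Sum>_{P \<in> U} |P| \<le> (\<alpha> - 1) |Q|. Since 56^(-km) |Q| \<le> 56^m \<integral>_Q f, countable
  subadditivity of the measure f dx yields \<integral>_{\<Union>U} f \<le> 56^m (\<alpha> - 1) \<integral>_Q f, and this term
  is absorbed into the left-hand side.\<close>

lemma dyadic_cube_sets_lborel:
  assumes "dyadic_cube Q"
  shows "Q \<in> sets lborel"
proof -
  obtain j k where Q: "Q = {x. \<forall>i. real_of_int (k i) * 2 powr (- real_of_int j) \<le> x $ i
                \<and> x $ i < (real_of_int (k i) + 1) * 2 powr (- real_of_int j)}"
    using assms unfolding dyadic_cube_def by blast
  show ?thesis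
    unfolding Q by measurable
qed

lemma bounded_dyadic_cube:
  assumes "dyadic_cube (Q :: (real ^ 'n) set)"
  shows "bounded Q"
proof -
  obtain j k where Q: "Q = {x. \<forall>i. real_of_int (k i) * 2 powr (- real_of_int j) \<le> x $ i
                \<and> x $ i < (real_of_int (k i) + 1) * 2 powr (- real_of_int j)}"
    using assms unfolding dyadic_cube_def by blast
  have "Q \<subseteq> cbox (\<chi> i. real_of_int (k i) * 2 powr (- real_of_int j))
                  (\<chi> i. (real_of_int (k i) + 1) * 2 powr (- real_of_int j))"
    unfolding Q by (auto simp: mem_box_cart less_imp_le)
  then show ?thesis
    using bounded_cbox bounded_subset by blast
qed

lemma emeasure_dyadic_cube:
  assumes "dyadic_cube Q"
  shows "emeasure lborel Q = ennreal (measure lborel Q)"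
  using emeasure_bounded_finite[OF bounded_dyadic_cube[OF assms]]
  by (intro emeasure_eq_ennreal_measure) simp

lemma countable_dyadic_cubes: "countable {Q :: (real ^ 'n) set. dyadic_cube Q}"
proof -
  let ?cube = "\<lambda>(j::int, k::'n \<Rightarrow> int). {x :: real ^ 'n. \<forall>i.
     real_of_int (k i) * 2 powr (- real_of_int j) \<le> x $ i
     \<and> x $ i < (real_of_int (k i) + 1) * 2 powr (- real_of_int j)}"
  have "{Q. dyadic_cube Q} \<subseteq> range ?cube"
    unfolding dyadic_cube_def by force
  moreover have "countable (range ?cube)"
    by simp
  ultimately show ?thesis
    by (rule countable_subset)
qed

lemma sets_lborel_Union_dyadic_cubes:
  assumes "U \<subseteq> {Q :: (real ^ 'n) set. dyadic_cube Q}"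
  shows "\<Union>U \<in> sets lborel"
proof -
  have "countable U"
    using assms countable_dyadic_cubes by (rule countable_subset)
  moreover have "U \<subseteq> sets lborel"
    using assms dyadic_cube_sets_lborel by blast
  ultimately show ?thesis
    by blast
qed

lemma set_integrable_bounded_if_locally_integrable:
  assumes "locally_integrable f" "bounded A" "A \<in> sets lborel"
  shows "set_integrable lborel A f"
proof -
  have "set_integrable lborel (closure A) f"
    using assms(1,2) compact_closure unfolding locally_integrable_def by blast
  then show ?thesis
    using set_integrable_subset assms(3) closure_subset by blast
qed

lemma set_integrable_dyadic_cube:
  assumes "locally_integrable f" "dyadic_cube Q"
  shows "set_integrable lborel Q f"
  using set_integrable_bounded_if_locally_integrable[OF assms(1)]
    bounded_dyadic_cube[OF assms(2)] dyadic_cube_sets_lborel[OF assms(2)] .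

lemma infsum_cmult_right_le_ennreal:
  fixes g :: "'a \<Rightarrow> ennreal"
  shows "(\<Sum>\<^sub>\<infinity>P\<in>U. c * g P) \<le> c * (\<Sum>\<^sub>\<infinity>P\<in>U. g P)"
proof -
  have finite_sums: "sum (\<lambda>P. c * g P) F \<le> c * (\<Sum>\<^sub>\<infinity>P\<in>U. g P)"
    if "finite F \<and> F \<subseteq> U" for F
  proof -
    have "sum (\<lambda>P. c * g P) F = c * (\<Sum>\<^sub>\<infinity>P\<in>F. g P)"
      using that by (simp add: sum_distrib_left)
    also have "\<dots> \<le> c * (\<Sum>\<^sub>\<infinity>P\<in>U. g P)"
      by (intro mult_left_mono infsum_mono_neutral)
        (use that in \<open>auto intro: nonneg_summable_on_complete\<close>)
    finally show ?thesis .
  qed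
  show ?thesis
    unfolding nonneg_infsum_complete[of U "\<lambda>P. c * g P", OF zero_le]
    using finite_sums by (intro SUP_least) simp
qed

lemma emeasure_Union_le_infsum:
  assumes "countable U" "U \<subseteq> sets M"
  shows "emeasure M (\<Union>U) \<le> (\<Sum>\<^sub>\<infinity>P\<in>U. emeasure M P)"
proof (cases "U = {}")
  case False
  define A where "A = from_nat_into U"
  define B where "B n = \<Union>(A ` {..<n})" for n
  have range_A: "range A = U"
    using False assms(1) unfolding A_def by (rule range_from_nat_into)
  have B_sets: "range B \<subseteq> sets M"
    using assms(2) range_A unfolding B_def by blast
  have "incseq B"
    unfolding B_def incseq_def by auto (meson less_le_trans lessThan_iff)
  have "\<Union>(range B) = \<Union>(range A)"
  proof (intro equalityI subsetI)
    fix x assume "x \<in> \<Union>(range A)"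
    then obtain i where "x \<in> A i" by blast
    then have "x \<in> B (Suc i)" unfolding B_def by blast
    then show "x \<in> \<Union>(range B)" by blast
  qed (auto simp: B_def)
  then have "emeasure M (\<Union>U) = (SUP n. emeasure M (B n))"
    using SUP_emeasure_incseq[OF B_sets \<open>incseq B\<close>] range_A by simp
  also have "\<dots> \<le> (\<Sum>\<^sub>\<infinity>P\<in>U. emeasure M P)"
  proof (rule SUP_least)
    fix n
    have "emeasure M (B n) \<le> (\<Sum>P\<in>A ` {..<n}. emeasure M P)"
      unfolding B_def using emeasure_subadditive_finite[of "A ` {..<n}" id M] assms(2) range_A
      by auto
    also have "\<dots> = (\<Sum>\<^sub>\<infinity>P\<in>A ` {..<n}. emeasure M P)"
      by simp
    also have "\<dots> \<le> (\<Sum>\<^sub>\<infinity>P\<in>U. emeasure M P)"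
      by (rule infsum_mono_neutral) (use range_A in \<open>auto intro: nonneg_summable_on_complete\<close>)
    finally show "emeasure M (B n) \<le> (\<Sum>\<^sub>\<infinity>P\<in>U. emeasure M P)" .
  qed
  finally show ?thesis .
qed simp

lemma set_integral_Union_le_infsum:
  fixes f :: "'a \<Rightarrow> real"
  assumes "set_integrable M A f" "A \<in> sets M" "\<And>x. f x \<ge> 0"
    and "countable U" "U \<subseteq> sets M" "\<Union>U \<subseteq> A"
  shows "ennreal (LINT x:\<Union>U|M. f x) \<le> (\<Sum>\<^sub>\<infinity>P\<in>U. ennreal (LINT x:P|M. f x))"
proof -
  define \<nu> where "\<nu> = density M (\<lambda>x. ennreal (indicator A x * f x))"
  have "emeasure \<nu> B = ennreal (LINT x:B|M. f x)" if "B \<in> sets M" "B \<subseteq> A" for B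
  proof -
    have "set_integrable M B f"
      using set_integrable_subset assms(1) that by blast
    moreover have "(\<lambda>x. indicator A x * f x) \<in> borel_measurable M"
      using assms(1) unfolding set_integrable_def by (simp add: borel_measurable_integrable)
    ultimately have "emeasure \<nu> B = (\<integral>\<^sup>+x. ennreal (indicator B x * f x) \<partial>M)"
      unfolding \<nu>_def using that
      by (subst emeasure_density) (auto intro!: nn_integral_cong simp: indicator_def)
    also have "\<dots> = ennreal (LINT x:B|M. f x)"
      using \<open>set_integrable M B f\<close> assms(3)
      unfolding set_integrable_def set_lebesgue_integral_def real_scaleR_def
      by (intro nn_integral_eq_integral) auto
    finally show ?thesis .
  qed
  note emeasure_\<nu> = this
  have "\<Union>U \<in> sets M"
    using assms(4,5) by blast
  then have "ennreal (LINT x:\<Union>U|M. f x) = emeasure \<nu> (\<Union>U)"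
    using emeasure_\<nu> assms(6) by simp
  also have "\<dots> \<le> (\<Sum>\<^sub>\<infinity>P\<in>U. emeasure \<nu> P)"
    using emeasure_Union_le_infsum[of U \<nu>] assms(4,5) by (simp add: \<nu>_def)
  also have "\<dots> = (\<Sum>\<^sub>\<infinity>P\<in>U. ennreal (LINT x:P|M. f x))"
    using emeasure_\<nu> assms(5,6) by (intro infsum_cong) blast
  finally show ?thesis .
qed

lemma set_integral_Union_le_mult_infsum_measure:
  fixes f :: "'a \<Rightarrow> real"
  assumes "set_integrable M A f" "A \<in> sets M" "\<And>x. f x \<ge> 0"
    and "countable U" "U \<subseteq> sets M" "\<Union>U \<subseteq> A" "c \<ge> 0"
    and "\<And>P. P \<in> U \<Longrightarrow> (LINT x:P|M. f x) \<le> c * measure M P"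
    and "\<And>P. P \<in> U \<Longrightarrow> emeasure M P < \<infinity>"
  shows "ennreal (LINT x:\<Union>U|M. f x) \<le> ennreal c * (\<Sum>\<^sub>\<infinity>P\<in>U. emeasure M P)"
proof -
  have "ennreal (LINT x:\<Union>U|M. f x) \<le> (\<Sum>\<^sub>\<infinity>P\<in>U. ennreal (LINT x:P|M. f x))"
    using assms(1-6) by (rule set_integral_Union_le_infsum)
  also have "\<dots> \<le> (\<Sum>\<^sub>\<infinity>P\<in>U. ennreal c * emeasure M P)"
  proof (rule infsum_mono)
    fix P assume "P \<in> U"
    then have "ennreal (LINT x:P|M. f x) \<le> ennreal (c * measure M P)"
      using assms(8) by (intro ennreal_leI)
    also have "\<dots> = ennreal c * emeasure M P"
      using assms(7) emeasure_eq_ennreal_measure[of M P] assms(9)[OF \<open>P \<in> U\<close>]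
      by (simp add: ennreal_mult)
    finally show "ennreal (LINT x:P|M. f x) \<le> ennreal c * emeasure M P" .
  qed (auto intro: nonneg_summable_on_complete)
  also have "\<dots> \<le> ennreal c * (\<Sum>\<^sub>\<infinity>P\<in>U. emeasure M P)"
    by (rule infsum_cmult_right_le_ennreal)
  finally show ?thesis .
qed

lemma carleson_infsum_strict_subcubes_le:
  assumes "carleson \<alpha> S" "\<alpha> \<ge> 1" "Q \<in> S" "U \<subseteq> {P \<in> S. P \<subset> Q}"
  shows "(\<Sum>\<^sub>\<infinity>P\<in>U. emeasure lborel P) \<le> ennreal ((\<alpha> - 1) * measure lborel Q)"
proof -
  have Q_cube: "dyadic_cube Q"
    using assms(1,3) unfolding carleson_def by blast
  have "ennreal (measure lborel Q) + (\<Sum>\<^sub>\<infinity>P\<in>U. emeasure lborel P)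
      = (\<Sum>\<^sub>\<infinity>P\<in>insert Q U. emeasure lborel P)"
    using assms(4) emeasure_dyadic_cube[OF Q_cube]
    by (subst infsum_insert) (auto intro: nonneg_summable_on_complete)
  also have "\<dots> \<le> (\<Sum>\<^sub>\<infinity>P\<in>{P \<in> S. P \<subseteq> Q}. emeasure lborel P)"
    by (rule infsum_mono_neutral) (use assms(3,4) in \<open>auto intro: nonneg_summable_on_complete\<close>)
  also have "\<dots> \<le> ennreal \<alpha> * emeasure lborel Q"
    using assms(1,3) unfolding carleson_def by blast
  also have "\<dots> = ennreal (\<alpha> * measure lborel Q)"
    using assms(2) emeasure_dyadic_cube[OF Q_cube] by (simp add: ennreal_mult)
  finally have "(\<Sum>\<^sub>\<infinity>P\<in>U. emeasure lborel P)
      \<le> ennreal (\<alpha> * measure lborel Q) - ennreal (measure lborel Q)"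
    by (simp add: ennreal_le_minus_iff add.commute)
  then show ?thesis
    by (simp add: ennreal_minus left_diff_distrib)
qed

lemma dyadic_cube_if_Sk:
  assumes "carleson \<alpha> S" "P \<in> Sk m k S f"
  shows "dyadic_cube P"
  using assms unfolding carleson_def Sk_def by blast

lemma Sk_integral_bounds:
  assumes "P \<in> Sk m k S f"
  shows "(1/56) ^ (k * m) * measure lborel P \<le> 56 ^ m * (LINT x:P|lborel. f x)"
    and "(LINT x:P|lborel. f x) \<le> (1/56) ^ (k * m) * measure lborel P"
proof -
  have lower: "(1/56::real) ^ (m * (k + 1)) < (1 / measure lborel P) * (LINT x:P|lborel. f x)"
    and upper: "(1 / measure lborel P) * (LINT x:P|lborel. f x) \<le> (1/56::real) ^ (k * m)"
    using assms unfolding Sk_def by auto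
  have "measure lborel P \<noteq> 0"
    using lower by (rule contrapos_pn) simp
  then have P_pos: "measure lborel P > 0"
    using measure_nonneg[of lborel P] by linarith
  have "(1/56::real) ^ (k * m) = 56 ^ m * (1/56) ^ (m * (k + 1))"
    by (simp add: power_add power_mult_distrib[symmetric] mult.commute)
  also have "\<dots> \<le> 56 ^ m * ((1 / measure lborel P) * (LINT x:P|lborel. f x))"
    using less_imp_le[OF lower] by (rule mult_left_mono) simp
  finally show "(1/56) ^ (k * m) * measure lborel P \<le> 56 ^ m * (LINT x:P|lborel. f x)"
    using P_pos by (simp add: field_simps)
  show "(LINT x:P|lborel. f x) \<le> (1/56) ^ (k * m) * measure lborel P"
    using upper P_pos by (simp add: field_simps)
qed

lemma Sk_integral_strict_subcubes_le:
  fixes f :: "real ^ 'n \<Rightarrow> real"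
  assumes "carleson \<alpha> S" "\<alpha> \<ge> 1" "\<And>x. f x \<ge> 0" "locally_integrable f"
    and "Q \<in> Sk m k S f"
  shows "(LINT x:\<Union>{P \<in> Sk m k S f. P \<subset> Q}|lborel. f x)
           \<le> 56 ^ m * (\<alpha> - 1) * (LINT x:Q|lborel. f x)"
proof -
  define U where "U = {P \<in> Sk m k S f. P \<subset> Q}"
  define c :: real where "c = (1/56) ^ (k * m)"
  have U_cubes: "U \<subseteq> {P. dyadic_cube P}"
    using dyadic_cube_if_Sk[OF assms(1)] unfolding U_def by blast
  have Q_cube: "dyadic_cube Q"
    using dyadic_cube_if_Sk[OF assms(1,5)] .
  have "Q \<in> S" and U_strict: "U \<subseteq> {P \<in> S. P \<subset> Q}"
    using assms(5) unfolding U_def Sk_def by auto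
  have "ennreal (LINT x:\<Union>U|lborel. f x) \<le> ennreal c * (\<Sum>\<^sub>\<infinity>P\<in>U. emeasure lborel P)"
  proof (rule set_integral_Union_le_mult_infsum_measure)
    show "countable U"
      using U_cubes countable_dyadic_cubes by (rule countable_subset)
    show "U \<subseteq> sets lborel"
      using U_cubes dyadic_cube_sets_lborel by blast
    show "(LINT x:P|lborel. f x) \<le> c * measure lborel P" if "P \<in> U" for P
      using that Sk_integral_bounds(2) unfolding U_def c_def by blast
    show "emeasure lborel P < \<infinity>" if "P \<in> U" for P
    proof -
      have "dyadic_cube P"
        using that U_cubes by blast
      then show ?thesis
        by (simp add: emeasure_dyadic_cube)
    qed
  qed (use assms(3) set_integrable_dyadic_cube[OF assms(4) Q_cube]
           dyadic_cube_sets_lborel[OF Q_cube] in \<open>auto simp: U_def c_def\<close>)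
  also have "\<dots> \<le> ennreal c * ennreal ((\<alpha> - 1) * measure lborel Q)"
    using carleson_infsum_strict_subcubes_le[OF assms(1,2) \<open>Q \<in> S\<close> U_strict]
    by (rule mult_left_mono) simp
  also have "\<dots> = ennreal ((\<alpha> - 1) * (c * measure lborel Q))"
    using assms(2) by (simp add: c_def ennreal_mult[symmetric] mult_ac)
  finally have "(LINT x:\<Union>U|lborel. f x) \<le> (\<alpha> - 1) * (c * measure lborel Q)"
    using assms(2) by (subst (asm) ennreal_le_iff) (simp_all add: c_def)
  also have "\<dots> \<le> (\<alpha> - 1) * (56 ^ m * (LINT x:Q|lborel. f x))"
    using Sk_integral_bounds(1)[OF assms(5)] assms(2) unfolding c_def
    by (intro mult_left_mono) simp_all
  also have "\<dots> = 56 ^ m * (\<alpha> - 1) * (LINT x:Q|lborel. f x)"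
    by (simp only: mult_ac)
  finally show ?thesis
    unfolding U_def .
qed

lemma le_one_over_mult_if_mult_le:
  fixes a b c :: real
  assumes "c * a \<le> b" "c > 0"
  shows "a \<le> 1 / c * b"
  using assms by (simp add: pos_le_divide_eq mult.commute)

theorem mainTheorem4:
  fixes S :: "(real ^ 'n) set set" and f :: "real ^ 'n \<Rightarrow> real"
    and m k :: nat and \<alpha> :: real
  assumes "m > 0" and "\<alpha> > 1" and "56 ^ m * (\<alpha> - 1) < 1"
    and "carleson \<alpha> S"
    and "\<forall>x. f x \<ge> 0" and "locally_integrable f"
    and "k > 0"
    and "Q \<in> Sk m k S f"
  shows "(LINT x:Q|lborel. f x)
           \<le> 1 / (1 - 56 ^ m * (\<alpha> - 1)) * (LINT x:EQ (Sk m k S f) Q|lborel. f x)"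
proof -
  define U where "U = \<Union>{P \<in> Sk m k S f. P \<subset> Q}"
  define \<beta> :: real where "\<beta> = 56 ^ m * (\<alpha> - 1)"
  have Q_cube: "dyadic_cube Q"
    using dyadic_cube_if_Sk[OF assms(4,8)] .
  have "U \<subseteq> Q"
    unfolding U_def by blast
  have "U \<in> sets lborel"
    unfolding U_def using dyadic_cube_if_Sk[OF assms(4)]
    by (intro sets_lborel_Union_dyadic_cubes) blast
  have integrable_Q: "set_integrable lborel Q f"
    using set_integrable_dyadic_cube[OF assms(6) Q_cube] .
  have "(Q - U) \<union> U = Q"
    using \<open>U \<subseteq> Q\<close> by blast
  then have "(LINT x:Q|lborel. f x) = (LINT x:(Q - U) \<union> U|lborel. f x)"
    by simp
  also have "\<dots> = (LINT x:Q - U|lborel. f x) + (LINT x:U|lborel. f x)"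
  proof (rule set_integral_Un)
    show "set_integrable lborel (Q - U) f"
      using dyadic_cube_sets_lborel[OF Q_cube] \<open>U \<in> sets lborel\<close>
      by (intro set_integrable_subset[OF integrable_Q]) auto
    show "set_integrable lborel U f"
      using integrable_Q \<open>U \<in> sets lborel\<close> \<open>U \<subseteq> Q\<close> by (rule set_integrable_subset)
  qed auto
  also have "\<dots> \<le> (LINT x:Q - U|lborel. f x) + \<beta> * (LINT x:Q|lborel. f x)"
    using Sk_integral_strict_subcubes_le[OF assms(4) _ assms(5)[rule_format] assms(6,8)] assms(2)
    unfolding U_def[symmetric] \<beta>_def[symmetric] by simp
  finally have "(1 - \<beta>) * (LINT x:Q|lborel. f x) \<le> (LINT x:Q - U|lborel. f x)"
    by (simp only: left_diff_distrib mult_1)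
  moreover have "1 - \<beta> > 0"
    using assms(3) unfolding \<beta>_def by simp
  ultimately have "(LINT x:Q|lborel. f x) \<le> 1 / (1 - \<beta>) * (LINT x:Q - U|lborel. f x)"
    by (rule le_one_over_mult_if_mult_le)
  moreover have "EQ (Sk m k S f) Q = Q - U"
    unfolding EQ_def U_def ..
  ultimately show ?thesis
    unfolding \<beta>_def by simp
qed

end
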